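(* Let $N\ge 1$ be an integer and let $a(1),a(2),\dots$ be a sequence of real numbers such that $a(n+m)\le a(n)+a(m)$ holds for all integers $n,m$ with $N\le n\le m\le 2n$. Then $\lim_{n\to\infty} a(n)/n$ exists (possibly $-\infty$) and $$\lim_{n\to\infty}\frac{a(n)}{n}=\inf_{k\ge N}\frac{a(k)}{k}.$$ *)

theory Defs
  imports "HOL-Analysis.Analysis"
begin

end

theory Submission
  imports Defs
begin

text \<open>Fix \<open>k \<ge> N\<close>. Splitting \<open>j\<close> into two halves shows \<open>a (j k) \<le> j a(k)\<close>. Any large \<open>n\<close> is
  \<open>j k + t\<close> with \<open>j k \<approx> n/2 \<le> t\<close>, so the hypothesis applies to this split and induction on \<open>n\<close>
  gives \<open>a n \<le> n a(k)/k + B\<close>. Hence \<open>limsup a(n)/n \<le> a(k)/k\<close> for every \<open>k \<ge> N\<close>, while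
  trivially \<open>liminf a(n)/n \<ge> inf\<^sub>k\<^sub>\<ge>\<^sub>N a(k)/k\<close>.\<close>

definition restricted_subadditive :: "nat \<Rightarrow> (nat \<Rightarrow> real) \<Rightarrow> bool" where
  "restricted_subadditive N a \<longleftrightarrow>
     (\<forall>n m. N \<le> n \<longrightarrow> n \<le> m \<longrightarrow> m \<le> 2 * n \<longrightarrow> a (n + m) \<le> a n + a m)"

lemma restricted_subadditiveD:
  "restricted_subadditive N a \<Longrightarrow> N \<le> n \<Longrightarrow> n \<le> m \<Longrightarrow> m \<le> 2 * n \<Longrightarrow> a (n + m) \<le> a n + a m"
  unfolding restricted_subadditive_def by blast

lemma restricted_subadditive_mult_le:
  assumes sub: "restricted_subadditive N a" and "N \<le> k" and "1 \<le> j"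
  shows "a (j * k) \<le> real j * a k"
  using \<open>1 \<le> j\<close>
proof (induction j rule: less_induct)
  case (less j)
  show ?case
  proof (cases "j = 1")
    case False
    define p where "p = j div 2"
    define q where "q = j - p"
    have pq: "1 \<le> p" "p < j" "q < j" "p \<le> q" "q \<le> 2 * p" "j = p + q"
      using False less.prems unfolding p_def q_def by auto
    have "N \<le> p * k"
      using pq(1) \<open>N \<le> k\<close> by (metis dual_order.trans mult_1 mult_le_mono1)
    then have "a (p * k + q * k) \<le> a (p * k) + a (q * k)"
      using pq by (intro restricted_subadditiveD[OF sub]) auto
    also have "\<dots> \<le> real p * a k + real q * a k"
      using less.IH[of p] less.IH[of q] pq by force
    finally show ?thesis
      using pq(6) by (simp add: algebra_simps)
  qed simp
qed

lemma restricted_subadditive_le_linear: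
  assumes sub: "restricted_subadditive N a" and k: "N \<le> k" "1 \<le> k"
  obtains B where "\<And>n. 6 * k \<le> n \<Longrightarrow> a n \<le> real n * (a k / real k) + B"
proof
  define c where "c = a k / real k"
  define B where "B = Max ((\<lambda>t. a t - real t * c) ` {6 * k..12 * k})"
  fix n assume "6 * k \<le> n"
  then show "a n \<le> real n * c + B"
  proof (induction n rule: less_induct)
    case (less n)
    show ?case
    proof (cases "n \<le> 12 * k")
      case True
      have "a n - real n * c \<le> B"
        unfolding B_def by (rule Max_ge) (use True less.prems in auto)
      then show ?thesis by simp
    next
      case False
      define j where "j = (n div 2) div k"
      define t where "t = n - j * k"
      have "j * k \<le> n div 2" "n div 2 < j * k + k"
        unfolding j_def using k(2) div_mult_mod_eq[of "n div 2" k] mod_less_divisor[of k "n div 2"]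
        by linarith+
      moreover from this have j: "1 \<le> j"
        using False by (cases j) auto
      ultimately have t: "j * k \<le> t" "t \<le> 2 * (j * k)" "t < n" "6 * k \<le> t"
        and n: "n = j * k + t"
        using False k unfolding t_def by auto
      have "N \<le> j * k"
        using j k by (metis dual_order.trans mult_1 mult_le_mono1)
      then have "a n \<le> a (j * k) + a t"
        using restricted_subadditiveD[OF sub _ t(1,2)] n by simp
      also have "\<dots> \<le> real j * a k + (real t * c + B)"
        using restricted_subadditive_mult_le[OF sub k(1) j] less.IH[OF t(3,4)] by simp
      also have "real j * a k = real (j * k) * c"
        unfolding c_def using k by simp
      finally show ?thesis
        using n by (simp add: algebra_simps)
    qed
  qed
qed

lemma Limsup_div_le_of_linear_bound:
  fixes a :: "nat \<Rightarrow> real"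
  assumes "\<forall>\<^sub>F n in sequentially. a n \<le> real n * c + B"
  shows "Limsup sequentially (\<lambda>n. ereal (a n / real n)) \<le> ereal c"
proof -
  have "\<forall>\<^sub>F n in sequentially. ereal (a n / real n) \<le> ereal (c + B / real n)"
    using assms eventually_gt_at_top[of 0]
  proof eventually_elim
    case (elim n)
    then have "a n / real n \<le> (real n * c + B) / real n"
      by (simp add: divide_right_mono)
    also have "\<dots> = c + B / real n"
      using elim by (simp add: field_simps)
    finally show ?case by simp
  qed
  then have "Limsup sequentially (\<lambda>n. ereal (a n / real n))
      \<le> Limsup sequentially (\<lambda>n. ereal (c + B / real n))"
    by (rule Limsup_mono)
  also have "((\<lambda>n. c + B / real n) \<longlongrightarrow> c + 0) sequentially"
    by (intro tendsto_intros tendsto_divide_0[OF tendsto_const] filterlim_real_sequentially)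
  then have "Limsup sequentially (\<lambda>n. ereal (c + B / real n)) = ereal c"
    by (intro lim_imp_Limsup) simp_all
  finally show ?thesis .
qed

lemma tendsto_INF_tail_if_Limsup_le:
  fixes f :: "nat \<Rightarrow> 'a :: {complete_linorder, linorder_topology}"
  assumes "\<And>k. N \<le> k \<Longrightarrow> Limsup sequentially f \<le> f k"
  shows "(f \<longlongrightarrow> (INF k\<in>{N..}. f k)) sequentially"
proof (rule Liminf_eq_Limsup)
  have "(INF k\<in>{N..}. f k) \<le> Liminf sequentially f"
    by (intro Liminf_bounded eventually_mono[OF eventually_ge_at_top[of N]]) (simp add: INF_lower)
  moreover have "Limsup sequentially f \<le> (INF k\<in>{N..}. f k)"
    using assms by (auto intro: INF_greatest)
  moreover have "Liminf sequentially f \<le> Limsup sequentially f"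
    by (rule Liminf_le_Limsup) simp
  ultimately show "Liminf sequentially f = (INF k\<in>{N..}. f k)"
    and "Limsup sequentially f = (INF k\<in>{N..}. f k)"
    by (auto intro: order.antisym)
qed simp

theorem theorem2p1:
  fixes a :: "nat \<Rightarrow> real" and N :: nat
  assumes "N \<ge> 1"
    and "\<And>n m. N \<le> n \<Longrightarrow> n \<le> m \<Longrightarrow> m \<le> 2 * n \<Longrightarrow> a (n + m) \<le> a n + a m"
  shows "((\<lambda>n. ereal (a n / real n)) \<longlongrightarrow> (INF k\<in>{N..}. ereal (a k / real k))) sequentially"
proof (rule tendsto_INF_tail_if_Limsup_le)
  have sub: "restricted_subadditive N a"
    using assms(2) unfolding restricted_subadditive_def by blast
  fix k assume k: "N \<le> k"
  then have "1 \<le> k"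
    using assms(1) by simp
  then obtain B where "\<And>n. 6 * k \<le> n \<Longrightarrow> a n \<le> real n * (a k / real k) + B"
    using restricted_subadditive_le_linear[OF sub k] by blast
  then have "\<forall>\<^sub>F n in sequentially. a n \<le> real n * (a k / real k) + B"
    by (rule eventually_mono[OF eventually_ge_at_top])
  then show "Limsup sequentially (\<lambda>n. ereal (a n / real n)) \<le> ereal (a k / real k)"
    by (rule Limsup_div_le_of_linear_bound)
qed

end
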